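(* Let $\hat A,\hat B,\hat C,\hat D$ be matrices with entries in $NCFD$ of sizes $k\times m$, $p\times s$, $m\times n$, $s\times r$ respectively. Then $$(\hat A\otimes\hat B)\odot(\hat C\otimes\hat D)=(\hat A\odot\hat C)\otimes(\hat B\odot\hat D).$$
   Context: $NCFD$ is the set of normal convex type-1 fuzzy sets $\mu:[0,1]\to[0,1]$ ($\max_u\mu(u)=1$, and $\mu(u_j)\ge\min\{\mu(u_i),\mu(u_k)\}$ for $u_i\le u_j\le u_k$). Operations: $(\mu_1\sqcup\mu_2)(v)=\sup\{\min(\mu_1(u),\mu_2(w)):\max(u,w)=v\}$, $(\mu_1\sqcap\mu_2)(v)=\sup\{\min(\mu_1(u),\mu_2(w)):\min(u,w)=v\}$. For matrices $R$ ($a\times b$) and $S$ ($b\times c$) with entries in $NCFD$, $R\odot S$ is the $a\times c$ matrix $(R\odot S)(x,z)=\bigsqcup_{y=1}^{b}[R(x,y)\sqcap S(y,z)]$. For $\hat A=[\tilde a_{ij}]$ ($k\times m$) and $\hat B=[\tilde b_{pq}]$ ($p\times s$), the bi-fuzzy tensor $\hat A\otimes\hat B$ is the $kp\times ms$ block matrix whose $(i,j)$ block is $\tilde a_{ij}\sqcap\hat B:=[\tilde a_{ij}\sqcap\tilde b_{pq}]_{p,q}$. *)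

theory Defs
  imports Main "HOL.Real"
begin

text \<open>Type-1 fuzzy sets on [0,1] are represented as functions real \<Rightarrow> real;
only their values on [0,1] are meaningful. The operations below return 0 outside [0,1].\<close>

type_synonym fz = "real \<Rightarrow> real"

definition NCFD :: "fz set" where
  "NCFD = {\<mu>. (\<forall>u\<in>{0..1}. 0 \<le> \<mu> u \<and> \<mu> u \<le> 1)
             \<and> (\<exists>u\<in>{0..1}. \<mu> u = 1)
             \<and> (\<forall>ui uj uk. 0 \<le> ui \<and> ui \<le> uj \<and> uj \<le> uk \<and> uk \<le> 1
                   \<longrightarrow> \<mu> uj \<ge> min (\<mu> ui) (\<mu> uk))}"

definition fjoin :: "fz \<Rightarrow> fz \<Rightarrow> fz" where
  "fjoin \<mu>1 \<mu>2 = (\<lambda>v. if v \<in> {0..1}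
     then Sup {min (\<mu>1 u) (\<mu>2 w) | u w. u \<in> {0..1} \<and> w \<in> {0..1} \<and> max u w = v}
     else 0)"

definition fmeet :: "fz \<Rightarrow> fz \<Rightarrow> fz" where
  "fmeet \<mu>1 \<mu>2 = (\<lambda>v. if v \<in> {0..1}
     then Sup {min (\<mu>1 u) (\<mu>2 w) | u w. u \<in> {0..1} \<and> w \<in> {0..1} \<and> min u w = v}
     else 0)"

fun bigjoin :: "(nat \<Rightarrow> fz) \<Rightarrow> nat \<Rightarrow> fz" where
  "bigjoin f 0 = (\<lambda>_. 0)"
| "bigjoin f (Suc 0) = f 0"
| "bigjoin f (Suc (Suc n)) = fjoin (bigjoin f (Suc n)) (f (Suc n))"

text \<open>Matrices: entry functions, 0-based indices; dimensions tracked separately.\<close>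
type_synonym fmat = "nat \<Rightarrow> nat \<Rightarrow> fz"

definition fmat_in :: "nat \<Rightarrow> nat \<Rightarrow> fmat \<Rightarrow> bool" where
  "fmat_in a b R \<longleftrightarrow> (\<forall>i<a. \<forall>j<b. R i j \<in> NCFD)"

text \<open>Composition R \<odot> S, where b is the number of columns of R (= rows of S).\<close>
definition fcomp :: "nat \<Rightarrow> fmat \<Rightarrow> fmat \<Rightarrow> fmat" where
  "fcomp b R S = (\<lambda>x z. bigjoin (\<lambda>y. fmeet (R x y) (S y z)) b)"

text \<open>Bi-fuzzy tensor A \<otimes> B, where B is p \<times> s: block (i,j) is a_ij \<sqcap> B.\<close>
definition ftensor :: "nat \<Rightarrow> nat \<Rightarrow> fmat \<Rightarrow> fmat \<Rightarrow> fmat" where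
  "ftensor p s A B = (\<lambda>x y. fmeet (A (x div p) (y div s)) (B (x mod p) (y mod s)))"

end

theory Submission
  imports Defs
begin

text \<open>A normal convex fuzzy set on [0,1] is determined by its left and right envelopes
  L f v = sup {f u | u \<le> v} and R f v = sup {f u | u \<ge> v}, because f = min (L f) (R f).
  In terms of envelopes, \<open>\<sqcup>\<close> acts pointwise as (min, max) and \<open>\<sqcap>\<close> as (max, min).
  Hence on NCFD the meet is associative and commutative and distributes over finite joins.
  Splitting the summation index y < m s of the left-hand side as (y div s, y mod s), its
  (x, z) entry is a join over pairs (u, w) of (a \<sqcap> c) \<sqcap> (b \<sqcap> d), which factors as the meet
  of the two joins forming the (x, z) entry of the right-hand side.\<close>

definition unit_valued :: "fz \<Rightarrow> bool" where
  "unit_valued f \<longleftrightarrow> (\<forall>u\<in>{0..1}. 0 \<le> f u \<and> f u \<le> 1)"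

definition normal :: "fz \<Rightarrow> bool" where
  "normal f \<longleftrightarrow> (\<exists>u\<in>{0..1}. f u = 1)"

definition left_env :: "fz \<Rightarrow> real \<Rightarrow> real" where
  "left_env f v = Sup (f ` {0..v})"

definition right_env :: "fz \<Rightarrow> real \<Rightarrow> real" where
  "right_env f v = Sup (f ` {v..1})"

lemma bdd_above_image_unit_valued: "unit_valued f \<Longrightarrow> S \<subseteq> {0..1} \<Longrightarrow> bdd_above (f ` S)"
  unfolding unit_valued_def bdd_above_def by (rule exI[of _ 1]) auto

lemma left_env_upper: "unit_valued f \<Longrightarrow> 0 \<le> u \<Longrightarrow> u \<le> v \<Longrightarrow> v \<le> 1 \<Longrightarrow> f u \<le> left_env f v"
  unfolding left_env_def by (rule cSup_upper) (auto intro: bdd_above_image_unit_valued)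

lemma right_env_upper: "unit_valued f \<Longrightarrow> 0 \<le> v \<Longrightarrow> v \<le> u \<Longrightarrow> u \<le> 1 \<Longrightarrow> f u \<le> right_env f v"
  unfolding right_env_def by (rule cSup_upper) (auto intro: bdd_above_image_unit_valued)

lemma left_env_least: "0 \<le> v \<Longrightarrow> (\<And>u. 0 \<le> u \<Longrightarrow> u \<le> v \<Longrightarrow> f u \<le> y) \<Longrightarrow> left_env f v \<le> y"
  unfolding left_env_def by (rule cSup_least) auto

lemma right_env_least: "v \<le> 1 \<Longrightarrow> (\<And>u. v \<le> u \<Longrightarrow> u \<le> 1 \<Longrightarrow> f u \<le> y) \<Longrightarrow> right_env f v \<le> y"
  unfolding right_env_def by (rule cSup_least) auto

lemma less_left_envE:
  assumes "unit_valued f" "0 \<le> v" "v \<le> 1" "y < left_env f v"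
  obtains u where "0 \<le> u" "u \<le> v" "y < f u"
  using assms less_cSup_iff[of "f ` {0..v}" y] bdd_above_image_unit_valued[of f "{0..v}"]
  unfolding left_env_def by auto

lemma less_right_envE:
  assumes "unit_valued f" "0 \<le> v" "v \<le> 1" "y < right_env f v"
  obtains u where "v \<le> u" "u \<le> 1" "y < f u"
  using assms less_cSup_iff[of "f ` {v..1}" y] bdd_above_image_unit_valued[of f "{v..1}"]
  unfolding right_env_def by auto

lemma left_env_mono: "unit_valued f \<Longrightarrow> 0 \<le> u \<Longrightarrow> u \<le> v \<Longrightarrow> v \<le> 1 \<Longrightarrow> left_env f u \<le> left_env f v"
  by (rule left_env_least) (auto intro: left_env_upper)

lemma NCFD_iff_envelopes:
  "f \<in> NCFD \<longleftrightarrow> unit_valued f \<and> normal f \<and> (\<forall>v\<in>{0..1}. f v = min (left_env f v) (right_env f v))"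
proof -
  have envelopes_if_convex: "f v = min (left_env f v) (right_env f v)"
    if uv: "unit_valued f" and v: "0 \<le> v" "v \<le> 1"
      and convex: "\<And>ui uj uk. 0 \<le> ui \<Longrightarrow> ui \<le> uj \<Longrightarrow> uj \<le> uk \<Longrightarrow> uk \<le> 1 \<Longrightarrow> min (f ui) (f uk) \<le> f uj"
    for v
  proof (rule antisym)
    show "f v \<le> min (left_env f v) (right_env f v)"
      using uv v by (auto intro: left_env_upper right_env_upper)
    show "min (left_env f v) (right_env f v) \<le> f v"
    proof (rule ccontr)
      assume "\<not> ?thesis"
      then obtain u w where "0 \<le> u" "u \<le> v" "f v < f u" "v \<le> w" "w \<le> 1" "f v < f w"
        using less_left_envE[OF uv v, of "f v"] less_right_envE[OF uv v, of "f v"]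
        by (metis min_less_iff_conj not_le)
      with convex[of u v w] show False by auto
    qed
  qed
  have convex_if_envelopes: "min (f ui) (f uk) \<le> f uj"
    if uv: "unit_valued f" and env: "\<forall>v\<in>{0..1}. f v = min (left_env f v) (right_env f v)"
      and "0 \<le> ui" "ui \<le> uj" "uj \<le> uk" "uk \<le> 1" for ui uj uk
  proof -
    have "f ui \<le> left_env f uj" "f uk \<le> right_env f uj"
      using uv that(3-6) by (auto intro!: left_env_upper right_env_upper)
    then show ?thesis using env that(3-6) by force
  qed
  show ?thesis
    unfolding NCFD_def unit_valued_def[symmetric] normal_def[symmetric] mem_Collect_eq
  proof (intro iffI conjI)
    assume "unit_valued f \<and> normal f \<and>
      (\<forall>ui uj uk. 0 \<le> ui \<and> ui \<le> uj \<and> uj \<le> uk \<and> uk \<le> 1 \<longrightarrow> min (f ui) (f uk) \<le> f uj)"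
    then show "\<forall>v\<in>{0..1}. f v = min (left_env f v) (right_env f v)"
      using envelopes_if_convex by (metis atLeastAtMost_iff)
  next
    assume "unit_valued f \<and> normal f \<and> (\<forall>v\<in>{0..1}. f v = min (left_env f v) (right_env f v))"
    then show "\<forall>ui uj uk. 0 \<le> ui \<and> ui \<le> uj \<and> uj \<le> uk \<and> uk \<le> 1 \<longrightarrow> min (f ui) (f uk) \<le> f uj"
      using convex_if_envelopes by blast
  qed simp_all
qed

lemma NCFD_eqI:
  assumes "f \<in> NCFD" "g \<in> NCFD" "\<And>v. v \<notin> {0..1} \<Longrightarrow> f v = g v"
    and "\<And>v. 0 \<le> v \<Longrightarrow> v \<le> 1 \<Longrightarrow> left_env f v = left_env g v"
    and "\<And>v. 0 \<le> v \<Longrightarrow> v \<le> 1 \<Longrightarrow> right_env f v = right_env g v"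
  shows "f = g"
proof
  fix v show "f v = g v"
    using assms NCFD_iff_envelopes by (cases "v \<in> {0..1}") auto
qed

lemma fjoin_eq:
  assumes f: "unit_valued f" and g: "unit_valued g" and v: "0 \<le> v" "v \<le> 1"
  shows "fjoin f g v = max (min (f v) (left_env g v)) (min (left_env f v) (g v))"
proof -
  let ?S = "{min (f u) (g w) | u w. u \<in> {0..1} \<and> w \<in> {0..1} \<and> max u w = v}"
  have "Sup ?S = max (min (f v) (left_env g v)) (min (left_env f v) (g v))"
  proof (rule cSup_eq_non_empty)
    show "?S \<noteq> {}" using v by (auto intro!: exI[of _ v])
  next
    fix x assume "x \<in> ?S"
    then obtain u w where uw: "u \<in> {0..1}" "w \<in> {0..1}" "max u w = v" "x = min (f u) (g w)"
      by auto
    show "x \<le> max (min (f v) (left_env g v)) (min (left_env f v) (g v))"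
    proof (cases "w \<le> u")
      case True
      then have "u = v" "g w \<le> left_env g v" using uw g v by (auto intro: left_env_upper)
      then show ?thesis using uw by auto
    next
      case False
      then have "w = v" "f u \<le> left_env f v" using uw f v by (auto intro: left_env_upper)
      then show ?thesis using uw by auto
    qed
  next
    fix y assume ub: "\<And>x. x \<in> ?S \<Longrightarrow> x \<le> y"
    have "min (f v) (left_env g v) \<le> y"
    proof (cases "f v \<le> y")
      case False
      have "left_env g v \<le> y"
      proof (rule left_env_least)
        fix w assume "0 \<le> w" "w \<le> v"
        then have "min (f v) (g w) \<le> y" using v by (intro ub) force
        then show "g w \<le> y" using False by auto
      qed (use v in auto)
      then show ?thesis by auto
    qed auto
    moreover have "min (left_env f v) (g v) \<le> y"
    proof (cases "g v \<le> y")
      case False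
      have "left_env f v \<le> y"
      proof (rule left_env_least)
        fix u assume "0 \<le> u" "u \<le> v"
        then have "min (f u) (g v) \<le> y" using v by (intro ub) force
        then show "f u \<le> y" using False by auto
      qed (use v in auto)
      then show ?thesis by auto
    qed auto
    ultimately show "max (min (f v) (left_env g v)) (min (left_env f v) (g v)) \<le> y" by auto
  qed
  then show ?thesis using v unfolding fjoin_def by auto
qed

lemma fjoin_between:
  assumes "unit_valued f" "unit_valued g" "0 \<le> v" "v \<le> 1"
  shows "min (f v) (g v) \<le> fjoin f g v" "fjoin f g v \<le> max (f v) (g v)"
proof -
  have "f v \<le> left_env f v" "g v \<le> left_env g v" using assms by (auto intro: left_env_upper)
  then show "min (f v) (g v) \<le> fjoin f g v" "fjoin f g v \<le> max (f v) (g v)"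
    using fjoin_eq[OF assms] by auto
qed

lemma unit_valued_fjoin: "unit_valued f \<Longrightarrow> unit_valued g \<Longrightarrow> unit_valued (fjoin f g)"
proof (unfold unit_valued_def[of "fjoin f g"], intro ballI)
  fix v :: real assume fg: "unit_valued f" "unit_valued g" and v: "v \<in> {0..1}"
  have "0 \<le> f v" "f v \<le> 1" "0 \<le> g v" "g v \<le> 1"
    using fg v by (auto simp: unit_valued_def)
  then show "0 \<le> fjoin f g v \<and> fjoin f g v \<le> 1"
    using fjoin_between[OF fg] v by fastforce
qed

lemma fjoin_commute: "fjoin f g = fjoin g f"
  unfolding fjoin_def by (intro ext) (metis (no_types, lifting) max.commute min.commute)

lemma left_env_fjoin:
  assumes f: "unit_valued f" and g: "unit_valued g" and v: "0 \<le> v" "v \<le> 1"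
  shows "left_env (fjoin f g) v = min (left_env f v) (left_env g v)"
proof (rule antisym)
  show "left_env (fjoin f g) v \<le> min (left_env f v) (left_env g v)"
  proof (rule left_env_least)
    fix x assume x: "0 \<le> x" "x \<le> v"
    have "f x \<le> left_env f v" "g x \<le> left_env g v" "left_env f x \<le> left_env f v" "left_env g x \<le> left_env g v"
      using f g x v by (auto intro: left_env_upper left_env_mono)
    then show "fjoin f g x \<le> min (left_env f v) (left_env g v)"
      using fjoin_eq[OF f g] x v by auto
  qed (use v in auto)
  show "min (left_env f v) (left_env g v) \<le> left_env (fjoin f g) v"
  proof (rule ccontr)
    let ?y = "left_env (fjoin f g) v"
    assume "\<not> ?thesis"
    then obtain u w where u: "0 \<le> u" "u \<le> v" "?y < f u" and w: "0 \<le> w" "w \<le> v" "?y < g w"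
      using less_left_envE[OF f v] less_left_envE[OF g v] by (metis min_less_iff_conj not_le)
    \<comment> \<open>at max u w the values of f and g, or their left envelopes, both exceed ?y\<close>
    define t where "t = max u w"
    have "f u \<le> left_env f t" "g w \<le> left_env g t" "f t \<le> left_env f t" "g t \<le> left_env g t"
      using f g u w v by (auto simp: t_def intro: left_env_upper)
    then have "?y < fjoin f g t"
      using fjoin_eq[OF f g, of t] u w v by (auto simp: t_def max_def)
    moreover have "fjoin f g t \<le> ?y"
      using unit_valued_fjoin[OF f g] u w v by (auto simp: t_def intro: left_env_upper)
    ultimately show False by auto
  qed
qed

lemma fjoin_dominates_left:
  assumes f: "unit_valued f" and g: "unit_valued g" "normal g" and u: "0 \<le> u" "u \<le> 1"
  obtains t where "u \<le> t" "t \<le> 1" "f u \<le> fjoin f g t"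
proof -
  obtain w where w: "0 \<le> w" "w \<le> 1" "g w = 1" using g unfolding normal_def by auto
  have "f u \<le> 1" using f u by (auto simp: unit_valued_def)
  show ?thesis
  proof (cases "w \<le> u")
    case True
    then have "g w \<le> left_env g u" using g w u by (intro left_env_upper) auto
    then have "f u \<le> fjoin f g u" using fjoin_eq[OF f g(1) u] \<open>f u \<le> 1\<close> w by auto
    then show ?thesis using that u by auto
  next
    case False
    then have "f u \<le> left_env f w" using f w u by (intro left_env_upper) auto
    then have "f u \<le> fjoin f g w" using fjoin_eq[OF f g(1) w(1,2)] \<open>f u \<le> 1\<close> w by auto
    then show ?thesis using that[of w] w False by auto
  qed
qed

lemma right_env_fjoin:
  assumes f: "unit_valued f" "normal f" and g: "unit_valued g" "normal g" and v: "0 \<le> v" "v \<le> 1"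
  shows "right_env (fjoin f g) v = max (right_env f v) (right_env g v)"
proof (rule antisym)
  show "right_env (fjoin f g) v \<le> max (right_env f v) (right_env g v)"
  proof (rule right_env_least)
    fix x assume x: "v \<le> x" "x \<le> 1"
    have "f x \<le> right_env f v" "g x \<le> right_env g v"
      using f g x v by (auto intro: right_env_upper)
    then show "fjoin f g x \<le> max (right_env f v) (right_env g v)"
      using fjoin_between(2)[OF f(1) g(1), of x] x v by auto
  qed (use v in auto)
  have fg: "unit_valued (fjoin f g)" using f g by (auto intro: unit_valued_fjoin)
  have "h u \<le> right_env (fjoin f g) v"
    if h: "h = f \<or> h = g" and u: "v \<le> u" "u \<le> 1" for h u
  proof -
    obtain t where "u \<le> t" "t \<le> 1" "h u \<le> fjoin f g t"
      using h fjoin_dominates_left[of f g u] fjoin_dominates_left[of g f u] f g u v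
      by (metis fjoin_commute order_trans)
    moreover have "fjoin f g t \<le> right_env (fjoin f g) v"
      using fg \<open>u \<le> t\<close> \<open>t \<le> 1\<close> u v by (intro right_env_upper) auto
    ultimately show ?thesis by auto
  qed
  then have "right_env f v \<le> right_env (fjoin f g) v" "right_env g v \<le> right_env (fjoin f g) v"
    using v by (blast intro: right_env_least)+
  then show "max (right_env f v) (right_env g v) \<le> right_env (fjoin f g) v" by auto
qed

lemma normal_fjoin:
  assumes f: "unit_valued f" "normal f" and g: "unit_valued g" "normal g"
  shows "normal (fjoin f g)"
proof -
  obtain u where u: "0 \<le> u" "u \<le> 1" "f u = 1" using f unfolding normal_def by auto
  then obtain t where t: "u \<le> t" "t \<le> 1" "1 \<le> fjoin f g t"
    using fjoin_dominates_left[OF f(1) g] by metis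
  moreover have "fjoin f g t \<le> 1"
    using unit_valued_fjoin[OF f(1) g(1)] t u by (auto simp: unit_valued_def)
  ultimately show ?thesis using u unfolding normal_def by (intro bexI[of _ t]) auto
qed

lemma fjoin_NCFD:
  assumes "f \<in> NCFD" "g \<in> NCFD"
  shows "fjoin f g \<in> NCFD"
proof -
  have f: "unit_valued f" "normal f" "\<forall>v\<in>{0..1}. f v = min (left_env f v) (right_env f v)"
    and g: "unit_valued g" "normal g" "\<forall>v\<in>{0..1}. g v = min (left_env g v) (right_env g v)"
    using assms NCFD_iff_envelopes by auto
  have "fjoin f g v = min (left_env (fjoin f g) v) (right_env (fjoin f g) v)"
    if "0 \<le> v" "v \<le> 1" for v
    using that f g fjoin_eq[OF f(1) g(1) that] left_env_fjoin[OF f(1) g(1) that]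
      right_env_fjoin[OF f(1,2) g(1,2) that]
    by (auto simp: min_def max_def)
  then show ?thesis
    using f g unit_valued_fjoin normal_fjoin NCFD_iff_envelopes by auto
qed

text \<open>The reflection u \<mapsto> 1 - u reverses the order of [0,1]; it exchanges \<open>\<sqcup>\<close> with
  \<open>\<sqcap>\<close> and the left with the right envelope, so the facts about meets follow from those
  about joins.\<close>

definition reflect :: "fz \<Rightarrow> fz" where
  "reflect f = (\<lambda>v. f (1 - v))"

lemma reflect_reflect [simp]: "reflect (reflect f) = f"
  by (simp add: reflect_def)

lemma reflect_NCFD:
  assumes "f \<in> NCFD" shows "reflect f \<in> NCFD"
proof -
  have bounded: "\<forall>u\<in>{0..1}. 0 \<le> f u \<and> f u \<le> 1" and peak: "\<exists>u\<in>{0..1}. f u = 1"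
    and convex: "\<And>ui uj uk. 0 \<le> ui \<and> ui \<le> uj \<and> uj \<le> uk \<and> uk \<le> 1 \<Longrightarrow> min (f ui) (f uk) \<le> f uj"
    using assms unfolding NCFD_def by auto
  from peak obtain u where "u \<in> {0..1}" "f u = 1" by auto
  then have "1 - u \<in> {0..1} \<and> f (1 - (1 - u)) = 1" by auto
  moreover have "min (f (1 - ui)) (f (1 - uk)) \<le> f (1 - uj)"
    if "0 \<le> ui" "ui \<le> uj" "uj \<le> uk" "uk \<le> 1" for ui uj uk
    using convex[of "1 - uk" "1 - uj" "1 - ui"] that by (simp add: min.commute)
  ultimately show ?thesis
    using bounded unfolding NCFD_def reflect_def by (auto intro!: bexI[of _ "1 - u"])
qed

lemma left_env_reflect: "left_env (reflect f) v = right_env f (1 - v)"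
  unfolding left_env_def right_env_def reflect_def
  by (simp add: image_image[of f "(-) 1", symmetric])

lemma right_env_reflect: "right_env (reflect f) v = left_env f (1 - v)"
  unfolding left_env_def right_env_def reflect_def
  by (simp add: image_image[of f "(-) 1", symmetric])

lemma reflect_fmeet: "reflect (fmeet f g) = fjoin (reflect f) (reflect g)"
proof
  fix v :: real
  have "{min (f u) (g w) |u w. u \<in> {0..1} \<and> w \<in> {0..1} \<and> min u w = 1 - v}
      = {min (f (1 - u)) (g (1 - w)) |u w. u \<in> {0..1} \<and> w \<in> {0..1} \<and> max u w = v}"
  proof (intro equalityI subsetI)
    fix x assume "x \<in> {min (f u) (g w) |u w. u \<in> {0..1} \<and> w \<in> {0..1} \<and> min u w = 1 - v}"
    then obtain u w where "u \<in> {0..1}" "w \<in> {0..1}" "min u w = 1 - v" "x = min (f u) (g w)"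
      by auto
    then have "x = min (f (1 - (1 - u))) (g (1 - (1 - w)))" "1 - u \<in> {0..1}" "1 - w \<in> {0..1}"
      "max (1 - u) (1 - w) = v"
      by (auto simp: max_def min_def split: if_splits)
    then show "x \<in> {min (f (1 - u)) (g (1 - w)) |u w. u \<in> {0..1} \<and> w \<in> {0..1} \<and> max u w = v}"
      by blast
  next
    fix x assume "x \<in> {min (f (1 - u)) (g (1 - w)) |u w. u \<in> {0..1} \<and> w \<in> {0..1} \<and> max u w = v}"
    then obtain u w where "u \<in> {0..1}" "w \<in> {0..1}" "max u w = v" "x = min (f (1 - u)) (g (1 - w))"
      by auto
    then have "1 - u \<in> {0..1}" "1 - w \<in> {0..1}" "min (1 - u) (1 - w) = 1 - v"
      by (auto simp: max_def min_def split: if_splits)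
    then show "x \<in> {min (f u) (g w) |u w. u \<in> {0..1} \<and> w \<in> {0..1} \<and> min u w = 1 - v}"
      using \<open>x = min (f (1 - u)) (g (1 - w))\<close> by blast
  qed
  then show "reflect (fmeet f g) v = fjoin (reflect f) (reflect g) v"
    unfolding reflect_def fmeet_def fjoin_def by auto
qed

lemma fmeet_eq_reflect_fjoin: "fmeet f g = reflect (fjoin (reflect f) (reflect g))"
  by (metis reflect_fmeet reflect_reflect)

lemma fmeet_NCFD: "f \<in> NCFD \<Longrightarrow> g \<in> NCFD \<Longrightarrow> fmeet f g \<in> NCFD"
  unfolding fmeet_eq_reflect_fjoin by (intro reflect_NCFD fjoin_NCFD)

lemma left_env_fmeet:
  assumes "f \<in> NCFD" "g \<in> NCFD" "0 \<le> v" "v \<le> 1"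
  shows "left_env (fmeet f g) v = max (left_env f v) (left_env g v)"
  using right_env_fjoin[of "reflect f" "reflect g" "1 - v"] assms reflect_NCFD NCFD_iff_envelopes
  by (simp add: fmeet_eq_reflect_fjoin left_env_reflect right_env_reflect)

lemma right_env_fmeet:
  assumes "f \<in> NCFD" "g \<in> NCFD" "0 \<le> v" "v \<le> 1"
  shows "right_env (fmeet f g) v = min (right_env f v) (right_env g v)"
  using left_env_fjoin[of "reflect f" "reflect g" "1 - v"] assms reflect_NCFD NCFD_iff_envelopes
  by (simp add: fmeet_eq_reflect_fjoin left_env_reflect right_env_reflect)

lemma fmeet_outside: "v \<notin> {0..1} \<Longrightarrow> fmeet f g v = 0"
  by (auto simp: fmeet_def)

lemma fmeet_interchange:
  assumes "a \<in> NCFD" "b \<in> NCFD" "c \<in> NCFD" "d \<in> NCFD"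
  shows "fmeet (fmeet a b) (fmeet c d) = fmeet (fmeet a c) (fmeet b d)"
proof (rule NCFD_eqI)
  fix v :: real assume v: "0 \<le> v" "v \<le> 1"
  show "left_env (fmeet (fmeet a b) (fmeet c d)) v = left_env (fmeet (fmeet a c) (fmeet b d)) v"
    using assms v by (simp add: fmeet_NCFD left_env_fmeet max.assoc max.left_commute)
  show "right_env (fmeet (fmeet a b) (fmeet c d)) v = right_env (fmeet (fmeet a c) (fmeet b d)) v"
    using assms v by (simp add: fmeet_NCFD right_env_fmeet min.assoc min.left_commute)
qed (use assms in \<open>auto simp: fmeet_NCFD fmeet_outside\<close>)

lemma bigjoin_cong: "(\<And>i. i < n \<Longrightarrow> F i = G i) \<Longrightarrow> bigjoin F n = bigjoin G n"
  by (induction F n rule: bigjoin.induct) auto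

lemma bigjoin_outside: "v \<notin> {0..1} \<Longrightarrow> F 0 v = 0 \<Longrightarrow> bigjoin F n v = 0"
  by (induction F n rule: bigjoin.induct) (auto simp: fjoin_def)

lemma bigjoin_NCFD: "0 < n \<Longrightarrow> (\<And>i. i < n \<Longrightarrow> F i \<in> NCFD) \<Longrightarrow> bigjoin F n \<in> NCFD"
  by (induction F n rule: bigjoin.induct) (auto intro: fjoin_NCFD)

lemma left_env_bigjoin:
  assumes "0 < n" "\<And>i. i < n \<Longrightarrow> F i \<in> NCFD" "0 \<le> v" "v \<le> 1"
  shows "left_env (bigjoin F n) v = Min ((\<lambda>i. left_env (F i) v) ` {..<n})"
  using assms
proof (induction F n rule: bigjoin.induct)
  case (3 F n)
  have "bigjoin F (Suc n) \<in> NCFD" "F (Suc n) \<in> NCFD"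
    using "3.prems" by (auto intro: bigjoin_NCFD)
  then show ?case
    using "3" left_env_fjoin[of "bigjoin F (Suc n)" "F (Suc n)" v] NCFD_iff_envelopes
    by (simp add: lessThan_Suc min.commute)
qed (auto simp: lessThan_Suc)

lemma right_env_bigjoin:
  assumes "0 < n" "\<And>i. i < n \<Longrightarrow> F i \<in> NCFD" "0 \<le> v" "v \<le> 1"
  shows "right_env (bigjoin F n) v = Max ((\<lambda>i. right_env (F i) v) ` {..<n})"
  using assms
proof (induction F n rule: bigjoin.induct)
  case (3 F n)
  have "bigjoin F (Suc n) \<in> NCFD" "F (Suc n) \<in> NCFD"
    using "3.prems" by (auto intro: bigjoin_NCFD)
  then show ?case
    using "3" right_env_fjoin[of "bigjoin F (Suc n)" "F (Suc n)" v] NCFD_iff_envelopes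
    by (simp add: lessThan_Suc max.commute)
qed (auto simp: lessThan_Suc)

lemma Min_max_product:
  fixes a :: "'a \<Rightarrow> 'c::linorder" and b :: "'b \<Rightarrow> 'c"
  assumes "finite A" "A \<noteq> {}" "finite B" "B \<noteq> {}"
  shows "Min ((\<lambda>(x, y). max (a x) (b y)) ` (A \<times> B)) = max (Min (a ` A)) (Min (b ` B))"
proof (rule Min_eqI)
  have "Min (a ` A) \<in> a ` A" "Min (b ` B) \<in> b ` B"
    using assms by (auto intro: Min_in)
  then show "max (Min (a ` A)) (Min (b ` B)) \<in> (\<lambda>(x, y). max (a x) (b y)) ` (A \<times> B)"
    by force
  show "max (Min (a ` A)) (Min (b ` B)) \<le> z" if z: "z \<in> (\<lambda>(x, y). max (a x) (b y)) ` (A \<times> B)" for z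
  proof -
    obtain x y where "x \<in> A" "y \<in> B" "z = max (a x) (b y)" using z by auto
    moreover have "Min (a ` A) \<le> a x" "Min (b ` B) \<le> b y"
      using assms \<open>x \<in> A\<close> \<open>y \<in> B\<close> by auto
    ultimately show ?thesis by (metis max.mono)
  qed
qed (use assms in auto)

lemma Max_min_product:
  fixes a :: "'a \<Rightarrow> 'c::linorder" and b :: "'b \<Rightarrow> 'c"
  assumes "finite A" "A \<noteq> {}" "finite B" "B \<noteq> {}"
  shows "Max ((\<lambda>(x, y). min (a x) (b y)) ` (A \<times> B)) = min (Max (a ` A)) (Max (b ` B))"
proof (rule Max_eqI)
  have "Max (a ` A) \<in> a ` A" "Max (b ` B) \<in> b ` B"
    using assms by (auto intro: Max_in)
  then show "min (Max (a ` A)) (Max (b ` B)) \<in> (\<lambda>(x, y). min (a x) (b y)) ` (A \<times> B)"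
    by force
  show "z \<le> min (Max (a ` A)) (Max (b ` B))" if z: "z \<in> (\<lambda>(x, y). min (a x) (b y)) ` (A \<times> B)" for z
  proof -
    obtain x y where "x \<in> A" "y \<in> B" "z = min (a x) (b y)" using z by auto
    moreover have "a x \<le> Max (a ` A)" "b y \<le> Max (b ` B)"
      using assms \<open>x \<in> A\<close> \<open>y \<in> B\<close> by auto
    ultimately show ?thesis by (metis min.mono)
  qed
qed (use assms in auto)

lemma div_mod_image_lessThan_mult:
  fixes s :: nat
  assumes "0 < s"
  shows "(\<lambda>y. (y div s, y mod s)) ` {..<m * s} = {..<m} \<times> {..<s}"
proof (intro equalityI subsetI)
  fix p assume "p \<in> (\<lambda>y. (y div s, y mod s)) ` {..<m * s}"
  then show "p \<in> {..<m} \<times> {..<s}"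
    using assms by (auto simp: less_mult_imp_div_less)
next
  fix p assume "p \<in> {..<m} \<times> {..<s}"
  then obtain u w where p: "p = (u, w)" "u < m" "w < s" by auto
  have "u * s + w < Suc u * s" using p by simp
  also have "\<dots> \<le> m * s" using p by (intro mult_le_mono1) simp
  finally have "u * s + w < m * s" .
  then show "p \<in> (\<lambda>y. (y div s, y mod s)) ` {..<m * s}"
    using p by (intro image_eqI[of _ _ "u * s + w"]) auto
qed

lemma fmeet_bigjoin_distrib:
  assumes m: "0 < m" and s: "0 < s"
    and F: "\<And>u. u < m \<Longrightarrow> F u \<in> NCFD" and H: "\<And>w. w < s \<Longrightarrow> H w \<in> NCFD"
  shows "bigjoin (\<lambda>y. fmeet (F (y div s)) (H (y mod s))) (m * s) = fmeet (bigjoin F m) (bigjoin H s)"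
proof (rule NCFD_eqI)
  have div_mod: "y div s < m" "y mod s < s" if "y < m * s" for y
    using that s by (auto simp: less_mult_imp_div_less)
  have G: "fmeet (F (y div s)) (H (y mod s)) \<in> NCFD" if "y < m * s" for y
    using div_mod[OF that] F H by (intro fmeet_NCFD)
  have pairs: "(\<lambda>y. g (y div s) (y mod s)) ` {..<m * s} = (\<lambda>(u, w). g u w) ` ({..<m} \<times> {..<s})"
    for g :: "nat \<Rightarrow> nat \<Rightarrow> real"
    by (simp flip: div_mod_image_lessThan_mult[OF s] add: image_image)
  show "bigjoin (\<lambda>y. fmeet (F (y div s)) (H (y mod s))) (m * s) \<in> NCFD"
    using m s G by (intro bigjoin_NCFD) auto
  show "fmeet (bigjoin F m) (bigjoin H s) \<in> NCFD"
    using m s F H by (intro fmeet_NCFD bigjoin_NCFD)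
  fix v :: real
  show "bigjoin (\<lambda>y. fmeet (F (y div s)) (H (y mod s))) (m * s) v = fmeet (bigjoin F m) (bigjoin H s) v"
    if "v \<notin> {0..1}"
    using that by (simp add: bigjoin_outside fmeet_outside)
  assume v: "0 \<le> v" "v \<le> 1"
  show "left_env (bigjoin (\<lambda>y. fmeet (F (y div s)) (H (y mod s))) (m * s)) v
      = left_env (fmeet (bigjoin F m) (bigjoin H s)) v"
    using m s F H G v div_mod pairs[of "\<lambda>u w. max (left_env (F u) v) (left_env (H w) v)"]
      Min_max_product[where a = "\<lambda>u. left_env (F u) v" and b = "\<lambda>w. left_env (H w) v"
        and A = "{..<m}" and B = "{..<s}"]
    by (simp add: left_env_bigjoin left_env_fmeet bigjoin_NCFD lessThan_empty_iff)
  show "right_env (bigjoin (\<lambda>y. fmeet (F (y div s)) (H (y mod s))) (m * s)) v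
      = right_env (fmeet (bigjoin F m) (bigjoin H s)) v"
    using m s F H G v div_mod pairs[of "\<lambda>u w. min (right_env (F u) v) (right_env (H w) v)"]
      Max_min_product[where a = "\<lambda>u. right_env (F u) v" and b = "\<lambda>w. right_env (H w) v"
        and A = "{..<m}" and B = "{..<s}"]
    by (simp add: right_env_bigjoin right_env_fmeet bigjoin_NCFD lessThan_empty_iff)
qed

theorem lemma1:
  fixes A B C D :: fmat and k m p s n r :: nat
  assumes "0 < k" "0 < m" "0 < p" "0 < s" "0 < n" "0 < r"
    and "fmat_in k m A" and "fmat_in p s B" and "fmat_in m n C" and "fmat_in s r D"
  shows "\<forall>x < k * p. \<forall>z < n * r.
           fcomp (m * s) (ftensor p s A B) (ftensor s r C D) x z
           = ftensor p r (fcomp m A C) (fcomp s B D) x z"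
proof (intro allI impI)
  fix x z assume "x < k * p" "z < n * r"
  then have "x div p < k" "x mod p < p" "z div r < n" "z mod r < r"
    using assms by (auto simp: less_mult_imp_div_less)
  then have AC: "\<And>u. u < m \<Longrightarrow> A (x div p) u \<in> NCFD \<and> C u (z div r) \<in> NCFD"
    and BD: "\<And>w. w < s \<Longrightarrow> B (x mod p) w \<in> NCFD \<and> D w (z mod r) \<in> NCFD"
    using assms by (auto simp: fmat_in_def)
  have "fcomp (m * s) (ftensor p s A B) (ftensor s r C D) x z
      = bigjoin (\<lambda>y. fmeet (fmeet (A (x div p) (y div s)) (C (y div s) (z div r)))
                           (fmeet (B (x mod p) (y mod s)) (D (y mod s) (z mod r)))) (m * s)"
    unfolding fcomp_def ftensor_def
    using AC BD assms(4) by (intro bigjoin_cong fmeet_interchange) (auto simp: less_mult_imp_div_less)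
  also have "\<dots> = ftensor p r (fcomp m A C) (fcomp s B D) x z"
    unfolding fcomp_def ftensor_def
    using AC BD assms(2,4) by (intro fmeet_bigjoin_distrib fmeet_NCFD) auto
  finally show "fcomp (m * s) (ftensor p s A B) (ftensor s r C D) x z
      = ftensor p r (fcomp m A C) (fcomp s B D) x z" .
qed

end
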